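(* Let $\mathcal{U}$ be a finite-dimensional real Hilbert space, let $\mathcal{W}$ be a real Hilbert space, let $\phi:\mathcal{U}\to\mathcal{B}(\mathcal{U},\mathcal{W})$ be a map with associated kernel $k(v_1,v_2)=\phi(v_1)^*\phi(v_2)\in\mathcal{B}(\mathcal{U})$, let $(u_i,y_i)\in\mathcal{U}\times\mathcal{U}$, $i=1,\dots,n$, be data and let $\gamma>0$. Let $\Phi\in\mathcal{B}(\mathcal{U}^n,\mathcal{W})$ be $\Phi(v_1,\dots,v_n)=\sum_i\phi(u_i)v_i$; for $u\in\mathcal{U}$ let $\kappa(u)=\Phi^*\phi(u)\in\mathcal{B}(\mathcal{U},\mathcal{U}^n)$, i.e. $\kappa(u)v=(k(u_1,u)v,\dots,k(u_n,u)v)$; let $K_i=\kappa(u_i)$; let $K=\Phi^*\Phi\in\mathcal{B}(\mathcal{U}^n)$ be the Gram operator with $(i,j)$ block $k(u_i,u_j)$, and $K^{1/2}$ its self-adjoint nonnegative square root. Let $L(Q)=\sum_{i=1}^n\|\phi(u_i)^*Q\phi(u_i)u_i-y_i\|_{\mathcal{U}}^2$ for $Q\in\mathcal{B}(\mathcal{W})$. If the problem $\min_{Q\in\mathcal{B}^+(\mathcal{W})}L(Q)+\gamma\|Q\|$ has a solution, then a solution of it is given by $\hat Q=\Phi M\Phi^*$, where $M\in\mathcal{B}^+(\mathcal{U}^n)$ is a solution of $$\min_{M\in\mathcal{B}^+(\mathcal{U}^n)}\ \sum_{i=1}^n\|K_i^*MK_iu_i-y_i\|_{\mathcal{U}}^2+\gamma\|K^{1/2}MK^{1/2}\|.$$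 Moreover, the operator $G:\mathcal{U}\to\mathcal{U}$, $Gu=\phi(u)^*\hat Q\phi(u)u$, corresponding to this solution satisfies $Gu=\kappa(u)^*M\kappa(u)u$ for all $u\in\mathcal{U}$.
   Context: $\mathcal{U}^n$ is the $n$-fold Cartesian product with inner product $\sum_i\langle u_i,v_i\rangle_{\mathcal{U}}$. $\mathcal{B}(\mathcal{X},\mathcal{Y})$ denotes bounded linear operators, $\mathcal{B}(\mathcal{X})=\mathcal{B}(\mathcal{X},\mathcal{X})$, $^*$ is the adjoint, $\|\cdot\|$ the operator norm. An operator $G$ on a Hilbert space $\mathcal{H}$ is nonnegative if $\langle Gu,u\rangle_{\mathcal{H}}\ge0$ for all $u$ (self-adjointness not required); $\mathcal{B}^+(\mathcal{H})$ is the set of nonnegative operators in $\mathcal{B}(\mathcal{H})$. *)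

theory Defs
  imports "HOL-Analysis.Analysis"
begin

text \<open>Nonnegative operator: \<langle>G x, x\<rangle> \<ge> 0 for all x (self-adjointness not required).\<close>
definition nonneg_op :: "('a::real_inner \<Rightarrow>\<^sub>L 'a) \<Rightarrow> bool" where
  "nonneg_op G \<longleftrightarrow> (\<forall>x. 0 \<le> inner (blinfun_apply G x) x)"

definition badj :: "('a::real_inner \<Rightarrow>\<^sub>L 'b::real_inner) \<Rightarrow> ('b \<Rightarrow>\<^sub>L 'a)" where
  "badj f = Blinfun (adjoint (blinfun_apply f))"

definition op_sqrt :: "('a::real_inner \<Rightarrow>\<^sub>L 'a) \<Rightarrow> ('a \<Rightarrow>\<^sub>L 'a)" where
  "op_sqrt A = (THE S. badj S = S \<and> nonneg_op S \<and> S o\<^sub>L S = A)"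

text \<open>U^n is modelled as the vector type 'u ^ 'n (inner product = sum of componentwise inner products).
  Phi(v_1,...,v_n) = sum_i phi(u_i) v_i.\<close>
definition Phi_op :: "('u::real_inner \<Rightarrow> ('u \<Rightarrow>\<^sub>L 'w::real_inner)) \<Rightarrow> ('n::finite \<Rightarrow> 'u)
    \<Rightarrow> (('u ^ 'n) \<Rightarrow>\<^sub>L 'w)" where
  "Phi_op phi u = Blinfun (\<lambda>v. \<Sum>i\<in>UNIV. blinfun_apply (phi (u i)) (v $ i))"

definition kappa_op :: "('u::real_inner \<Rightarrow> ('u \<Rightarrow>\<^sub>L 'w::real_inner)) \<Rightarrow> ('n::finite \<Rightarrow> 'u)
    \<Rightarrow> 'u \<Rightarrow> ('u \<Rightarrow>\<^sub>L ('u ^ 'n))" where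
  "kappa_op phi u x = badj (Phi_op phi u) o\<^sub>L phi x"

definition Gram_op :: "('u::real_inner \<Rightarrow> ('u \<Rightarrow>\<^sub>L 'w::real_inner)) \<Rightarrow> ('n::finite \<Rightarrow> 'u)
    \<Rightarrow> (('u ^ 'n) \<Rightarrow>\<^sub>L ('u ^ 'n))" where
  "Gram_op phi u = badj (Phi_op phi u) o\<^sub>L Phi_op phi u"

definition objQ :: "('u::real_inner \<Rightarrow> ('u \<Rightarrow>\<^sub>L 'w::real_inner)) \<Rightarrow> ('n::finite \<Rightarrow> 'u)
    \<Rightarrow> ('n \<Rightarrow> 'u) \<Rightarrow> real \<Rightarrow> ('w \<Rightarrow>\<^sub>L 'w) \<Rightarrow> real" where
  "objQ phi u y \<gamma> Q =
     (\<Sum>i\<in>UNIV. (norm (blinfun_apply (badj (phi (u i)) o\<^sub>L Q o\<^sub>L phi (u i)) (u i) - y i))\<^sup>2)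
     + \<gamma> * norm Q"

definition objM :: "('u::real_inner \<Rightarrow> ('u \<Rightarrow>\<^sub>L 'w::real_inner)) \<Rightarrow> ('n::finite \<Rightarrow> 'u)
    \<Rightarrow> ('n \<Rightarrow> 'u) \<Rightarrow> real \<Rightarrow> (('u ^ 'n) \<Rightarrow>\<^sub>L ('u ^ 'n)) \<Rightarrow> real" where
  "objM phi u y \<gamma> M =
     (\<Sum>i\<in>UNIV. (norm (blinfun_apply
          (badj (kappa_op phi u (u i)) o\<^sub>L M o\<^sub>L kappa_op phi u (u i)) (u i) - y i))\<^sup>2)
     + \<gamma> * norm (op_sqrt (Gram_op phi u) o\<^sub>L M o\<^sub>L op_sqrt (Gram_op phi u))"

definition is_nonneg_minimizer :: "(('a::real_inner \<Rightarrow>\<^sub>L 'a) \<Rightarrow> real) \<Rightarrow> ('a \<Rightarrow>\<^sub>L 'a) \<Rightarrow> bool" where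
  "is_nonneg_minimizer f X \<longleftrightarrow> nonneg_op X \<and> (\<forall>Y. nonneg_op Y \<longrightarrow> f X \<le> f Y)"

end

theory Submission
  imports Defs
begin

(*
  Compressing a feasible Q to P Q P, where P is the orthogonal projection onto the range of \<Phi>,
  leaves the data term unchanged (every \<phi>(u_i) maps into that range) and does not increase the
  norm. With a pseudo-inverse K+ of the Gram operator K = \<Phi>*\<Phi> one has P = \<Phi> K+ \<Phi>*, so
  P Q P = \<Phi> M \<Phi>* with M = K+ \<Phi>* Q \<Phi> K+ \<ge> 0; hence the problem may be restricted to operators
  \<Phi> M \<Phi>*. On these the original objective is the reduced one: \<kappa>(u)* = \<phi>(u)* \<Phi> matches the data
  terms, and \<parallel>\<Phi> M \<Phi>*\<parallel> = \<parallel>K^(1/2) M K^(1/2)\<parallel> because \<parallel>\<Phi> x\<parallel> = \<parallel>K^(1/2) x\<parallel>, which by a Douglas-type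
  factorization argument makes \<Phi>* and K^(1/2) map the unit ball onto the same set.
*)

section \<open>Adjoints of operators on Euclidean spaces\<close>

(* On a Euclidean domain the adjoint exists; for other domains badj is unspecified,
   so every lemma below keeps the domain Euclidean. *)

lemma inner_badj:
  fixes f :: "'a::euclidean_space \<Rightarrow>\<^sub>L 'b::real_inner"
  shows "f x \<bullet> y = x \<bullet> badj f y"
proof -
  define g where "g y = (\<Sum>i\<in>Basis. (f i \<bullet> y) *\<^sub>R i)" for y
  have adj: "f x \<bullet> y = x \<bullet> g y" for x y
  proof -
    have "f x \<bullet> y = f (\<Sum>i\<in>Basis. (x \<bullet> i) *\<^sub>R i) \<bullet> y"
      by (simp add: euclidean_representation)
    also have "\<dots> = (\<Sum>i\<in>Basis. (x \<bullet> i) *\<^sub>R f i) \<bullet> y"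
      by (simp add: blinfun.sum_right blinfun.scaleR_right)
    finally show ?thesis
      by (simp add: g_def inner_sum_left inner_sum_right mult.commute)
  qed
  have "bounded_linear g"
    unfolding g_def
    by (intro bounded_linear_sum bounded_linear_scaleR_left[THEN bounded_linear_compose]
        bounded_linear_inner_right)
  moreover have "adjoint (blinfun_apply f) = g"
    by (rule adjoint_unique) (use adj in blast)
  ultimately have "blinfun_apply (badj f) = g"
    unfolding badj_def by (simp add: bounded_linear_Blinfun_apply)
  with adj show ?thesis by simp
qed

lemma inner_badj_left:
  fixes f :: "'a::euclidean_space \<Rightarrow>\<^sub>L 'b::real_inner"
  shows "badj f y \<bullet> x = y \<bullet> f x"
  using inner_badj[of f x y] by (simp add: inner_commute)

lemma badj_eqI:
  fixes f :: "'a::euclidean_space \<Rightarrow>\<^sub>L 'b::real_inner" and g :: "'b \<Rightarrow>\<^sub>L 'a"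
  assumes "\<And>x y. f x \<bullet> y = x \<bullet> g y"
  shows "badj f = g"
proof (rule blinfun_eqI)
  fix y
  have "x \<bullet> badj f y = x \<bullet> g y" for x
    using assms inner_badj by metis
  then show "badj f y = g y" using vector_eq_ldot by blast
qed

lemma badj_eq_self_iff:
  fixes T :: "'a::euclidean_space \<Rightarrow>\<^sub>L 'a"
  shows "badj T = T \<longleftrightarrow> (\<forall>x y. T x \<bullet> y = x \<bullet> T y)"
  by (metis badj_eqI inner_badj)

lemma badj_compose:
  fixes F :: "'b::euclidean_space \<Rightarrow>\<^sub>L 'c::real_inner" and G :: "'a::euclidean_space \<Rightarrow>\<^sub>L 'b"
  shows "badj (F o\<^sub>L G) = badj G o\<^sub>L badj F"
  by (rule badj_eqI) (simp add: inner_badj)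

lemma badj_badj_compose:
  fixes A :: "'a::euclidean_space \<Rightarrow>\<^sub>L 'c::real_inner" and B :: "'b::euclidean_space \<Rightarrow>\<^sub>L 'c"
  shows "badj (badj A o\<^sub>L B) = badj B o\<^sub>L A"
  by (rule badj_eqI) (simp add: inner_badj_left inner_badj)

lemma badj_Gram [simp]:
  fixes A :: "'a::euclidean_space \<Rightarrow>\<^sub>L 'b::real_inner"
  shows "badj (badj A o\<^sub>L A) = badj A o\<^sub>L A"
  by (rule badj_badj_compose)

lemma blinfun_compose_assoc:
  "(A o\<^sub>L B) o\<^sub>L C = A o\<^sub>L (B o\<^sub>L C)"
  by (rule blinfun_eqI) simp

lemma nonneg_op_sandwich:
  fixes A :: "'a::euclidean_space \<Rightarrow>\<^sub>L 'b::real_inner"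
  assumes "nonneg_op M"
  shows "nonneg_op (A o\<^sub>L M o\<^sub>L badj A)"
  using assms by (simp add: nonneg_op_def inner_badj)

lemma nonneg_op_badj_sandwich:
  fixes A :: "'a::euclidean_space \<Rightarrow>\<^sub>L 'b::real_inner"
  assumes "nonneg_op Q"
  shows "nonneg_op (badj A o\<^sub>L Q o\<^sub>L A)"
  using assms by (simp add: nonneg_op_def inner_badj_left)

lemma nonneg_op_Gram:
  fixes A :: "'a::euclidean_space \<Rightarrow>\<^sub>L 'b::real_inner"
  shows "nonneg_op (badj A o\<^sub>L A)"
  by (simp add: nonneg_op_def inner_badj_left)

section \<open>Spectral theorem, square roots and pseudo-inverses\<close>

lemma linear_coeff_eq_0_if_quadratic_nonpos:
  fixes a b :: real
  assumes "\<And>t. a * t + b * t\<^sup>2 \<le> 0"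
  shows "a = 0"
proof (rule ccontr)
  assume "a \<noteq> 0"
  define c where "c = \<bar>b\<bar> + 1"
  have "c > 0" "c + b > 0" by (auto simp: c_def)
  then have "a * (a / c) + b * (a / c)\<^sup>2 = a\<^sup>2 * (c + b) / c\<^sup>2"
    by (simp add: field_simps power2_eq_square)
  also have "\<dots> > 0"
    using \<open>a \<noteq> 0\<close> \<open>c > 0\<close> \<open>c + b > 0\<close> by (intro divide_pos_pos mult_pos_pos) auto
  finally show False using assms[of "a / c"] by linarith
qed

lemma selfadjoint_eigenvector_in_invariant_subspace:
  fixes A :: "'a::euclidean_space \<Rightarrow> 'a"
  assumes lin: "linear A" and sa: "\<And>x y. A x \<bullet> y = x \<bullet> A y"
    and W: "subspace W" "A ` W \<subseteq> W" "W \<noteq> {0}"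
  obtains e where "e \<in> W" "norm e = 1" "A e = (A e \<bullet> e) *\<^sub>R e"
proof -
  interpret linear A by fact
  define T where "T = sphere (0::'a) 1 \<inter> W"
  have normalized: "x /\<^sub>R norm x \<in> T" if "x \<in> W" "x \<noteq> 0" for x
    using that W(1) by (auto simp: T_def subspace_scale)
  obtain x0 where "x0 \<in> W" "x0 \<noteq> 0"
    using W(1,3) subspace_0 by blast
  then have "T \<noteq> {}" using normalized by blast
  moreover have "compact T"
    unfolding T_def by (intro compact_Int_closed compact_sphere closed_subspace W(1))
  moreover have "continuous_on T (\<lambda>x. A x \<bullet> x)"
    using lin[unfolded linear_conv_bounded_linear]
    by (intro continuous_intros linear_continuous_on)
  ultimately obtain e where eT: "e \<in> T" and emax: "\<And>x. x \<in> T \<Longrightarrow> A x \<bullet> x \<le> A e \<bullet> e"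
    using continuous_attains_sup[of T "\<lambda>x. A x \<bullet> x"] by blast
  define l where "l = A e \<bullet> e"
  have eW: "e \<in> W" and en: "norm e = 1" using eT by (auto simp: T_def)
  have ee: "e \<bullet> e = 1" using en by (simp add: norm_eq_1)
  \<comment> \<open>e maximizes the Rayleigh quotient on W; the first-order condition makes A e - l e orthogonal to W\<close>
  have rayleigh: "A x \<bullet> x \<le> l * (x \<bullet> x)" if "x \<in> W" for x
  proof (cases "x = 0")
    case False
    from emax[OF normalized[OF that False]]
    have "(A x \<bullet> x) / (norm x)\<^sup>2 \<le> l"
      by (simp add: l_def scale power2_eq_square divide_inverse mult_ac)
    moreover have "(norm x)\<^sup>2 = x \<bullet> x" by (simp add: power2_norm_eq_inner)
    ultimately show ?thesis using False by (simp add: divide_le_eq mult.commute)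
  qed (simp add: zero)
  have orth: "(A e - l *\<^sub>R e) \<bullet> y = 0" if yW: "y \<in> W" for y
  proof -
    have "(2 * (A e \<bullet> y) - 2 * l * (e \<bullet> y)) * t + (A y \<bullet> y - l * (y \<bullet> y)) * t\<^sup>2 \<le> 0" for t
    proof -
      have "e + t *\<^sub>R y \<in> W" using W(1) eW yW by (simp add: subspace_add subspace_scale)
      from rayleigh[OF this] have "A (e + t *\<^sub>R y) \<bullet> (e + t *\<^sub>R y) \<le> l * ((e + t *\<^sub>R y) \<bullet> (e + t *\<^sub>R y))" .
      moreover have "A y \<bullet> e = A e \<bullet> y" using sa[of y e] by (simp add: inner_commute)
      ultimately show ?thesis
        by (simp add: add scale inner_add_left inner_add_right ee l_def[symmetric] inner_commute[of y e]
            algebra_simps power2_eq_square)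
    qed
    from linear_coeff_eq_0_if_quadratic_nonpos[OF this] show ?thesis
      by (simp add: inner_diff_left algebra_simps)
  qed
  have "A e - l *\<^sub>R e \<in> W" using W eW by (simp add: subspace_diff subspace_scale image_subset_iff)
  from orth[OF this] have "A e = l *\<^sub>R e" by simp
  with eW en l_def that show ?thesis by blast
qed

lemma selfadjoint_invariant_subspace_eigenbasis:
  fixes A :: "'a::euclidean_space \<Rightarrow> 'a"
  assumes lin: "linear A" and sa: "\<And>x y. A x \<bullet> y = x \<bullet> A y"
    and "subspace W" "A ` W \<subseteq> W"
  shows "\<exists>B. finite B \<and> B \<subseteq> W \<and> pairwise orthogonal B \<and>
     (\<forall>b\<in>B. norm b = 1 \<and> A b = (A b \<bullet> b) *\<^sub>R b) \<and> (\<forall>x\<in>W. x = (\<Sum>b\<in>B. (x \<bullet> b) *\<^sub>R b))"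
  using assms(3,4)
proof (induction "dim W" arbitrary: W rule: less_induct)
  case less
  show ?case
  proof (cases "W = {0}")
    case True
    then show ?thesis by (intro exI[of _ "{}"]) auto
  next
    case False
    obtain e where eW: "e \<in> W" and en: "norm e = 1" and eA: "A e = (A e \<bullet> e) *\<^sub>R e"
      using selfadjoint_eigenvector_in_invariant_subspace[OF lin sa less(2,3) False] by blast
    have ee: "e \<bullet> e = 1" using en by (simp add: norm_eq_1)
    define W' where "W' = W \<inter> {y. orthogonal e y}"
    have sW': "subspace W'"
      unfolding W'_def using less(2) subspace_orthogonal_to_vector[of e] by (rule subspace_inter)
    have AW': "A ` W' \<subseteq> W'"
    proof
      fix z assume "z \<in> A ` W'"
      then obtain x where x: "x \<in> W'" "z = A x" by blast
      have "e \<bullet> A x = A e \<bullet> x" using sa[of e x] by simp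
      also have "\<dots> = 0" using x(1) by (subst eA) (simp add: W'_def orthogonal_def)
      finally show "z \<in> W'" using x less(3) by (auto simp: W'_def orthogonal_def)
    qed
    have "e \<notin> W'" using ee by (auto simp: W'_def orthogonal_def)
    with eW have "W' \<subset> W" by (auto simp: W'_def)
    with sW' less(2) have "dim W' < dim W"
      by (metis dim_psubset span_eq_iff)
    from less(1)[OF this sW' AW'] obtain B' where B': "finite B'" "B' \<subseteq> W'" "pairwise orthogonal B'"
      "\<forall>b\<in>B'. norm b = 1 \<and> A b = (A b \<bullet> b) *\<^sub>R b"
      "\<forall>x\<in>W'. x = (\<Sum>b\<in>B'. (x \<bullet> b) *\<^sub>R b)" by blast
    have "e \<notin> B'" using B'(2) \<open>e \<notin> W'\<close> by blast
    have orth_e: "e \<bullet> b = 0" if "b \<in> B'" for b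
      using that B'(2) by (auto simp: W'_def orthogonal_def)
    have "x = (\<Sum>b\<in>insert e B'. (x \<bullet> b) *\<^sub>R b)" if "x \<in> W" for x
    proof -
      define x' where "x' = x - (x \<bullet> e) *\<^sub>R e"
      have "x' \<in> W'" unfolding x'_def W'_def orthogonal_def using that eW less(2) ee
        by (auto simp: subspace_diff subspace_scale inner_diff_right inner_commute)
      then have "x' = (\<Sum>b\<in>B'. (x' \<bullet> b) *\<^sub>R b)" using B'(5) by blast
      also have "\<dots> = (\<Sum>b\<in>B'. (x \<bullet> b) *\<^sub>R b)"
        by (intro sum.cong refl) (simp add: x'_def inner_diff_left orth_e)
      finally show ?thesis
        using B'(1) \<open>e \<notin> B'\<close> by (simp add: x'_def algebra_simps)
    qed
    moreover have "pairwise orthogonal (insert e B')"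
      using B'(3) orth_e by (auto simp: pairwise_insert orthogonal_def inner_commute)
    ultimately show ?thesis
      using B'(1,2,4) eW en eA by (intro exI[of _ "insert e B'"]) (auto simp: W'_def)
  qed
qed

definition orthonormal_basis :: "'a::real_inner set \<Rightarrow> bool" where
  "orthonormal_basis B \<longleftrightarrow> finite B \<and> pairwise orthogonal B \<and> (\<forall>b\<in>B. norm b = 1) \<and>
     (\<forall>x. x = (\<Sum>b\<in>B. (x \<bullet> b) *\<^sub>R b))"

definition diag_op :: "'a::real_inner set \<Rightarrow> ('a \<Rightarrow> real) \<Rightarrow> ('a \<Rightarrow>\<^sub>L 'a)" where
  "diag_op B g = Blinfun (\<lambda>x. \<Sum>b\<in>B. (g b * (x \<bullet> b)) *\<^sub>R b)"

lemma orthonormal_basis_eqI: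
  assumes "orthonormal_basis B" "\<And>b. b \<in> B \<Longrightarrow> x \<bullet> b = y \<bullet> b"
  shows "x = y"
proof -
  have "x = (\<Sum>b\<in>B. (x \<bullet> b) *\<^sub>R b)" "y = (\<Sum>b\<in>B. (y \<bullet> b) *\<^sub>R b)"
    using assms(1) unfolding orthonormal_basis_def by blast+
  then show ?thesis using assms(2) by (metis (no_types, lifting) sum.cong)
qed

lemma orthonormal_basis_inner:
  assumes "orthonormal_basis B" "b \<in> B" "c \<in> B"
  shows "b \<bullet> c = (if b = c then 1 else 0)"
  using assms unfolding orthonormal_basis_def pairwise_def orthogonal_def
  by (auto simp: norm_eq_1)

lemma diag_op_apply: "diag_op B g x = (\<Sum>b\<in>B. (g b * (x \<bullet> b)) *\<^sub>R b)"
proof -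
  have "bounded_linear (\<lambda>x. (g b * (x \<bullet> b)) *\<^sub>R b)" for b
    by (intro bounded_linear_scaleR_left[THEN bounded_linear_compose]
        bounded_linear_mult_right[THEN bounded_linear_compose] bounded_linear_inner_left)
  then have "bounded_linear (\<lambda>x. \<Sum>b\<in>B. (g b * (x \<bullet> b)) *\<^sub>R b)"
    by (rule bounded_linear_sum)
  then show ?thesis unfolding diag_op_def by (simp add: bounded_linear_Blinfun_apply)
qed

lemma inner_diag_op_basis:
  assumes "orthonormal_basis B" "c \<in> B"
  shows "diag_op B g x \<bullet> c = g c * (x \<bullet> c)"
proof -
  have "diag_op B g x \<bullet> c = (\<Sum>b\<in>B. if b = c then g b * (x \<bullet> b) else 0)"
    unfolding diag_op_apply inner_sum_left
    by (intro sum.cong refl) (simp add: orthonormal_basis_inner[OF assms(1) _ assms(2)])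
  also have "\<dots> = g c * (x \<bullet> c)"
    using assms by (simp add: orthonormal_basis_def)
  finally show ?thesis .
qed

lemma diag_op_basis:
  assumes "orthonormal_basis B" "c \<in> B"
  shows "diag_op B g c = g c *\<^sub>R c"
  by (rule orthonormal_basis_eqI[OF assms(1)])
    (simp add: inner_diag_op_basis[OF assms(1)] orthonormal_basis_inner[OF assms])

lemma diag_op_compose:
  assumes "orthonormal_basis B"
  shows "diag_op B g o\<^sub>L diag_op B h = diag_op B (\<lambda>b. g b * h b)"
  by (intro blinfun_eqI orthonormal_basis_eqI[OF assms]) (simp add: inner_diag_op_basis[OF assms])

lemma diag_op_cong:
  assumes "orthonormal_basis B" "\<And>b. b \<in> B \<Longrightarrow> g b = h b"
  shows "diag_op B g = diag_op B h"
  by (intro blinfun_eqI orthonormal_basis_eqI[OF assms(1)])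
    (simp add: inner_diag_op_basis[OF assms(1)] assms(2))

lemma badj_diag_op:
  fixes B :: "'a::euclidean_space set"
  shows "badj (diag_op B g) = diag_op B g"
  unfolding badj_eq_self_iff diag_op_apply inner_sum_left inner_sum_right
  by (auto intro: sum.cong simp: inner_commute)

lemma nonneg_op_diag_op:
  assumes "\<And>b. b \<in> B \<Longrightarrow> g b \<ge> 0"
  shows "nonneg_op (diag_op B g)"
  unfolding nonneg_op_def diag_op_apply inner_sum_left
  using assms by (auto intro!: sum_nonneg simp: inner_commute mult.assoc)

lemma selfadjoint_diagonalization:
  fixes T :: "'a::euclidean_space \<Rightarrow>\<^sub>L 'a"
  assumes "badj T = T"
  obtains B g where "orthonormal_basis B" "T = diag_op B g"
proof -
  have lin: "linear (blinfun_apply T)"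
    by (simp add: blinfun.bounded_linear_right bounded_linear.linear)
  have sa: "T x \<bullet> y = x \<bullet> T y" for x y
    using assms by (simp add: badj_eq_self_iff)
  obtain B where "orthonormal_basis B" and eigen: "\<And>b. b \<in> B \<Longrightarrow> T b = (T b \<bullet> b) *\<^sub>R b"
    using selfadjoint_invariant_subspace_eigenbasis[OF lin sa subspace_UNIV]
    unfolding orthonormal_basis_def by auto
  moreover have "T = diag_op B (\<lambda>b. T b \<bullet> b)"
  proof (intro blinfun_eqI orthonormal_basis_eqI[OF \<open>orthonormal_basis B\<close>])
    fix x b assume "b \<in> B"
    have "T x \<bullet> b = x \<bullet> T b" by (rule sa)
    also have "\<dots> = (T b \<bullet> b) * (x \<bullet> b)" by (subst eigen[OF \<open>b \<in> B\<close>]) simp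
    finally show "T x \<bullet> b = diag_op B (\<lambda>b. T b \<bullet> b) x \<bullet> b"
      by (simp add: inner_diag_op_basis[OF \<open>orthonormal_basis B\<close> \<open>b \<in> B\<close>])
  qed
  ultimately show ?thesis using that by blast
qed

lemma nonneg_op_apply_eq_0:
  fixes T :: "'a::euclidean_space \<Rightarrow>\<^sub>L 'a"
  assumes "badj T = T" "nonneg_op T" "T c \<bullet> c = 0"
  shows "T c = 0"
proof -
  have "(- 2 * (T c \<bullet> y)) * t + (- (T y \<bullet> y)) * t\<^sup>2 \<le> 0" for y t
  proof -
    have "0 \<le> T (c + t *\<^sub>R y) \<bullet> (c + t *\<^sub>R y)"
      using assms(2) by (simp add: nonneg_op_def)
    moreover have "T y \<bullet> c = T c \<bullet> y"
      using assms(1) by (metis badj_eq_self_iff inner_commute)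
    ultimately show ?thesis
      using assms(3)
      by (simp add: blinfun.add_right blinfun.scaleR_right inner_add_left inner_add_right
          algebra_simps power2_eq_square)
  qed
  from linear_coeff_eq_0_if_quadratic_nonpos[OF this] have "T c \<bullet> y = 0" for y
    by simp
  then show ?thesis by (metis inner_eq_zero_iff)
qed

lemma selfadjoint_nonneg_sqrt_unique:
  fixes S T :: "'a::euclidean_space \<Rightarrow>\<^sub>L 'a"
  assumes S: "badj S = S" "nonneg_op S" and T: "badj T = T" "nonneg_op T"
    and "S o\<^sub>L S = T o\<^sub>L T"
  shows "S = T"
proof -
  define D where "D = S - T"
  have "badj D = D"
    using S(1) T(1) by (simp add: D_def badj_eq_self_iff blinfun.diff_left inner_diff_left inner_diff_right)
  then obtain C \<mu> where C: "orthonormal_basis C" and D_diag: "D = diag_op C \<mu>"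
    by (rule selfadjoint_diagonalization)
  have "D c = 0" if "c \<in> C" for c
  proof -
    have Dc: "D c = \<mu> c *\<^sub>R c" unfolding D_diag using C that by (rule diag_op_basis)
    have "S (S c) = T (T c)"
      using \<open>S o\<^sub>L S = T o\<^sub>L T\<close> by (metis blinfun_apply_blinfun_compose)
    then have "S (D c) + D (T c) = 0"
      by (simp add: D_def blinfun.diff_left blinfun.diff_right)
    then have "S (D c) \<bullet> c + D (T c) \<bullet> c = 0"
      by (metis inner_add_left inner_zero_left)
    moreover have "D (T c) \<bullet> c = \<mu> c * (T c \<bullet> c)"
      using \<open>badj D = D\<close> by (simp add: badj_eq_self_iff Dc)
    ultimately have "\<mu> c * (S c \<bullet> c + T c \<bullet> c) = 0"
      by (simp add: Dc blinfun.scaleR_right algebra_simps)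
    moreover have "0 \<le> S c \<bullet> c" "0 \<le> T c \<bullet> c"
      using S(2) T(2) by (simp_all add: nonneg_op_def)
    ultimately have "\<mu> c = 0 \<or> (S c \<bullet> c = 0 \<and> T c \<bullet> c = 0)"
      by auto
    then show ?thesis
    proof
      assume "S c \<bullet> c = 0 \<and> T c \<bullet> c = 0"
      then have "S c = 0" "T c = 0"
        using nonneg_op_apply_eq_0[OF S] nonneg_op_apply_eq_0[OF T] by blast+
      then show ?thesis by (simp add: D_def blinfun.diff_left)
    qed (simp add: Dc)
  qed
  then have "D x = 0" for x
    using \<open>badj D = D\<close> by (intro orthonormal_basis_eqI[OF C]) (simp add: badj_eq_self_iff)
  then show ?thesis by (intro blinfun_eqI) (simp add: D_def blinfun.diff_left)
qed

lemma op_sqrt_eqI: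
  fixes S :: "'a::euclidean_space \<Rightarrow>\<^sub>L 'a"
  assumes "badj S = S" "nonneg_op S" "S o\<^sub>L S = K"
  shows "op_sqrt K = S"
  unfolding op_sqrt_def
  by (rule the_equality) (use assms selfadjoint_nonneg_sqrt_unique in blast)+

lemma op_sqrt:
  fixes K :: "'a::euclidean_space \<Rightarrow>\<^sub>L 'a"
  assumes "badj K = K" "nonneg_op K"
  shows "badj (op_sqrt K) = op_sqrt K" "nonneg_op (op_sqrt K)" "op_sqrt K o\<^sub>L op_sqrt K = K"
proof -
  obtain B g where B: "orthonormal_basis B" and K: "K = diag_op B g"
    using assms(1) by (rule selfadjoint_diagonalization)
  have g_nonneg: "g b \<ge> 0" if "b \<in> B" for b
    using assms(2) unfolding nonneg_op_def K
    by (metis B that inner_diag_op_basis orthonormal_basis_inner mult.right_neutral)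
  define S where "S = diag_op B (\<lambda>b. sqrt (g b))"
  have "S o\<^sub>L S = K"
    unfolding S_def K diag_op_compose[OF B] by (rule diag_op_cong[OF B]) (simp add: g_nonneg)
  moreover have "badj S = S" "nonneg_op S"
    unfolding S_def by (simp_all add: badj_diag_op nonneg_op_diag_op g_nonneg)
  ultimately have "op_sqrt K = S" by (rule op_sqrt_eqI[rotated 2])
  with \<open>badj S = S\<close> \<open>nonneg_op S\<close> \<open>S o\<^sub>L S = K\<close>
  show "badj (op_sqrt K) = op_sqrt K" "nonneg_op (op_sqrt K)" "op_sqrt K o\<^sub>L op_sqrt K = K"
    by simp_all
qed

lemma norm_op_sqrt_Gram:
  fixes A :: "'a::euclidean_space \<Rightarrow>\<^sub>L 'b::real_inner"
  shows "norm (op_sqrt (badj A o\<^sub>L A) x) = norm (A x)"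
proof -
  let ?S = "op_sqrt (badj A o\<^sub>L A)"
  have "?S x \<bullet> ?S x = x \<bullet> badj A (A x)"
    using op_sqrt[OF badj_Gram nonneg_op_Gram, of A]
    by (metis badj_eq_self_iff blinfun_apply_blinfun_compose)
  also have "\<dots> = A x \<bullet> A x" by (simp add: inner_badj)
  finally show ?thesis by (simp add: norm_eq_sqrt_inner)
qed

lemma selfadjoint_pseudo_inverse:
  fixes K :: "'a::euclidean_space \<Rightarrow>\<^sub>L 'a"
  assumes "badj K = K"
  obtains G where "badj G = G" "K o\<^sub>L G o\<^sub>L K = K"
proof -
  obtain B g where B: "orthonormal_basis B" and K: "K = diag_op B g"
    using assms by (rule selfadjoint_diagonalization)
  define G where "G = diag_op B (\<lambda>b. inverse (g b))"
  have "K o\<^sub>L G o\<^sub>L K = K"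
    unfolding G_def K diag_op_compose[OF B] by (rule diag_op_cong[OF B]) (simp add: field_simps)
  moreover have "badj G = G" by (simp add: G_def badj_diag_op)
  ultimately show ?thesis using that by blast
qed

section \<open>A Douglas-type factorization\<close>

lemma badj_in_range_Gram:
  fixes A :: "'a::euclidean_space \<Rightarrow>\<^sub>L 'b::real_inner"
  shows "badj A y \<in> range (badj A o\<^sub>L A)"
proof -
  let ?R = "range (badj A o\<^sub>L A)"
  have "subspace ?R"
    by (intro linear_subspace_image subspace_UNIV bounded_linear.linear blinfun.bounded_linear_right)
  then have span_R: "span ?R = ?R" by (simp add: span_eq_iff)
  obtain p q where p: "p \<in> span ?R" and q: "\<And>w. w \<in> span ?R \<Longrightarrow> orthogonal q w"
    and decomp: "badj A y = p + q"
    using orthogonal_subspace_decomp_exists[of ?R "badj A y"] by metis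
  have "A q \<bullet> A q = q \<bullet> badj A (A q)" by (rule inner_badj)
  also have "\<dots> = 0"
    using q[OF span_base[of "badj A (A q)"]] by (simp add: orthogonal_def)
  finally have "q \<bullet> badj A y = 0" by (simp flip: inner_badj)
  moreover have "q \<bullet> p = 0" using q[OF p] by (simp add: orthogonal_def)
  ultimately have "q = 0" by (simp add: decomp inner_add_right)
  with p decomp show ?thesis by (simp only: span_R add_0_right)
qed

lemma Gram_eq_if_norm_eq:
  fixes A :: "'a::euclidean_space \<Rightarrow>\<^sub>L 'b::real_inner" and B :: "'a \<Rightarrow>\<^sub>L 'c::real_inner"
  assumes "\<And>x. norm (A x) = norm (B x)"
  shows "badj A o\<^sub>L A = badj B o\<^sub>L B"
proof (intro blinfun_eqI)
  fix x
  have "x' \<bullet> badj A (A x) = x' \<bullet> badj B (B x)" for x'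
  proof -
    have "x' \<bullet> badj A (A x) = A x' \<bullet> A x" by (simp add: inner_badj)
    also have "\<dots> = B x' \<bullet> B x"
      unfolding dot_norm blinfun.add_right[symmetric] assms ..
    finally show ?thesis by (simp add: inner_badj)
  qed
  then show "(badj A o\<^sub>L A) x = (badj B o\<^sub>L B) x"
    using vector_eq_ldot by auto
qed

lemma badj_eq_badj_contraction:
  fixes A :: "'a::euclidean_space \<Rightarrow>\<^sub>L 'b::real_inner" and B :: "'a \<Rightarrow>\<^sub>L 'c::real_inner"
  assumes "\<And>x. norm (A x) = norm (B x)"
  obtains z where "badj B z = badj A y" "norm z \<le> norm y"
proof -
  obtain x where x: "badj A y = badj A (A x)"
    using badj_in_range_Gram[of A y] by auto
  have Bx: "badj B (B x) = badj A y"
    using Gram_eq_if_norm_eq[OF assms] x by (metis blinfun_apply_blinfun_compose)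
  have "norm (B x) * norm (B x) = x \<bullet> badj B (B x)"
    by (simp flip: inner_badj add: norm_eq_sqrt_inner)
  also have "\<dots> = A x \<bullet> y" by (simp add: Bx inner_badj)
  also have "\<dots> \<le> norm (B x) * norm y"
    using norm_cauchy_schwarz[of "A x" y] assms by simp
  finally have "norm (B x) \<le> norm y"
    by (cases "B x = 0") (simp_all add: mult_le_cancel_left)
  with Bx that show ?thesis by blast
qed

lemma norm_sandwich_le:
  fixes A :: "'a::euclidean_space \<Rightarrow>\<^sub>L 'b::real_inner" and B :: "'a \<Rightarrow>\<^sub>L 'c::real_inner"
  assumes "\<And>x. norm (A x) = norm (B x)"
  shows "norm (A o\<^sub>L M o\<^sub>L badj A) \<le> norm (B o\<^sub>L M o\<^sub>L badj B)"
proof (rule norm_blinfun_bound)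
  fix y
  obtain z where z: "badj B z = badj A y" "norm z \<le> norm y"
    using assms by (rule badj_eq_badj_contraction)
  have "norm ((A o\<^sub>L M o\<^sub>L badj A) y) = norm ((B o\<^sub>L M o\<^sub>L badj B) z)"
    by (simp add: z(1) assms)
  also have "\<dots> \<le> norm (B o\<^sub>L M o\<^sub>L badj B) * norm z" by (rule norm_blinfun)
  also have "\<dots> \<le> norm (B o\<^sub>L M o\<^sub>L badj B) * norm y" by (simp add: z(2) mult_left_mono)
  finally show "norm ((A o\<^sub>L M o\<^sub>L badj A) y) \<le> norm (B o\<^sub>L M o\<^sub>L badj B) * norm y" .
qed simp

lemma norm_sandwich_eq:
  fixes A :: "'a::euclidean_space \<Rightarrow>\<^sub>L 'b::real_inner" and B :: "'a \<Rightarrow>\<^sub>L 'c::real_inner"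
  assumes "\<And>x. norm (A x) = norm (B x)"
  shows "norm (A o\<^sub>L M o\<^sub>L badj A) = norm (B o\<^sub>L M o\<^sub>L badj B)"
  using norm_sandwich_le[of A B M] norm_sandwich_le[of B A M] assms by (simp add: antisym)

section \<open>Reduction of the operator-valued problem\<close>

lemma Gram_pseudo_inverse_projection:
  fixes A :: "'a::euclidean_space \<Rightarrow>\<^sub>L 'b::real_inner"
  assumes G: "badj G = G" and KGK: "(badj A o\<^sub>L A) o\<^sub>L G o\<^sub>L (badj A o\<^sub>L A) = badj A o\<^sub>L A"
  defines "P \<equiv> A o\<^sub>L G o\<^sub>L badj A"
  shows "P (A x) = A x" and "P a \<bullet> b = a \<bullet> P b" and "norm P \<le> 1"
proof -
  show fixed: "P (A x) = A x" for x
  proof -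
    define d where "d = G (badj A (A x)) - x"
    have "badj A (A d) = 0"
      using KGK by (simp add: d_def blinfun.diff_right) (metis blinfun_apply_blinfun_compose)
    then have "A d \<bullet> A d = 0" by (simp add: inner_badj)
    then show ?thesis by (simp add: P_def d_def blinfun.diff_right)
  qed
  show sym: "P a \<bullet> b = a \<bullet> P b" for a b
    using G by (simp add: P_def inner_badj inner_badj_left badj_eq_self_iff)
  show "norm P \<le> 1"
  proof (rule norm_blinfun_bound)
    fix a
    have "P (P a) = P a" using fixed[of "G (badj A a)"] by (simp add: P_def)
    have "norm (P a) * norm (P a) = P a \<bullet> P a"
      by (simp flip: power2_norm_eq_inner add: power2_eq_square)
    also have "\<dots> = a \<bullet> P a" by (simp add: sym \<open>P (P a) = P a\<close>)
    also have "\<dots> \<le> norm a * norm (P a)" by (rule norm_cauchy_schwarz)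
    finally show "norm (P a) \<le> 1 * norm a"
      by (cases "P a = 0") (simp_all add: mult_le_cancel_right)
  qed simp
qed

lemma objQ_compress_le:
  fixes phi :: "'u::euclidean_space \<Rightarrow> ('u \<Rightarrow>\<^sub>L 'w::real_inner)" and P :: "'w \<Rightarrow>\<^sub>L 'w"
  assumes fixed: "\<And>i v. P (phi (u i) v) = phi (u i) v"
    and sym: "\<And>a b. P a \<bullet> b = a \<bullet> P b" and "norm P \<le> 1" and "\<gamma> \<ge> 0"
  shows "objQ phi u y \<gamma> (P o\<^sub>L Q o\<^sub>L P) \<le> objQ phi u y \<gamma> Q"
proof -
  have badj_P: "badj (phi (u i)) (P w) = badj (phi (u i)) w" for i w
  proof -
    have "v \<bullet> badj (phi (u i)) (P w) = v \<bullet> badj (phi (u i)) w" for v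
      by (metis fixed sym inner_badj)
    then show ?thesis using vector_eq_ldot by blast
  qed
  have "norm (P o\<^sub>L Q o\<^sub>L P) \<le> norm P * norm Q * norm P"
    by (meson norm_blinfun_compose order_trans mult_right_mono norm_ge_zero)
  also have "\<dots> = (norm P * norm P) * norm Q" by (simp add: ac_simps)
  also have "\<dots> \<le> norm Q"
    using \<open>norm P \<le> 1\<close> by (intro mult_left_le_one_le mult_le_one) simp_all
  finally show ?thesis
    using \<open>\<gamma> \<ge> 0\<close> by (simp add: objQ_def fixed badj_P mult_left_mono)
qed

lemma Phi_op_apply: "Phi_op phi u v = (\<Sum>i\<in>UNIV. phi (u i) (v $ i))"
proof -
  have "bounded_linear (\<lambda>v. \<Sum>i\<in>UNIV. phi (u i) (v $ i))"
    by (intro bounded_linear_sum bounded_linear_compose[OF blinfun.bounded_linear_right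
          bounded_linear_vec_nth])
  then show ?thesis unfolding Phi_op_def by (simp add: bounded_linear_Blinfun_apply)
qed

lemma Phi_op_axis: "Phi_op phi u (axis i v) = phi (u i) v"
  by (simp add: Phi_op_apply axis_def if_distrib blinfun.zero_right cong: if_cong)

lemma kappa_op_sandwich:
  fixes phi :: "'u::euclidean_space \<Rightarrow> ('u \<Rightarrow>\<^sub>L 'w::real_inner)"
  shows "badj (phi x) o\<^sub>L (Phi_op phi u o\<^sub>L M o\<^sub>L badj (Phi_op phi u)) o\<^sub>L phi x
    = badj (kappa_op phi u x) o\<^sub>L M o\<^sub>L kappa_op phi u x"
  by (simp add: kappa_op_def badj_badj_compose blinfun_compose_assoc)

lemma objQ_sandwich:
  fixes phi :: "'u::euclidean_space \<Rightarrow> ('u \<Rightarrow>\<^sub>L 'w::real_inner)"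
  shows "objQ phi u y \<gamma> (Phi_op phi u o\<^sub>L M o\<^sub>L badj (Phi_op phi u)) = objM phi u y \<gamma> M"
proof -
  let ?S = "op_sqrt (Gram_op phi u)"
  have "badj ?S = ?S"
    unfolding Gram_op_def by (rule op_sqrt(1)[OF badj_Gram nonneg_op_Gram])
  moreover have "norm (Phi_op phi u o\<^sub>L M o\<^sub>L badj (Phi_op phi u)) = norm (?S o\<^sub>L M o\<^sub>L badj ?S)"
    by (rule norm_sandwich_eq) (simp add: Gram_op_def norm_op_sqrt_Gram)
  ultimately show ?thesis
    by (simp add: objQ_def objM_def kappa_op_sandwich)
qed

lemma exists_objM_le_objQ:
  fixes phi :: "'u::euclidean_space \<Rightarrow> ('u \<Rightarrow>\<^sub>L 'w::real_inner)"
  assumes "nonneg_op Q" "\<gamma> \<ge> 0"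
  shows "\<exists>M. nonneg_op M \<and> objM phi u y \<gamma> M \<le> objQ phi u y \<gamma> Q"
proof -
  let ?\<Phi> = "Phi_op phi u"
  obtain G where G: "badj G = G" and KGK: "(badj ?\<Phi> o\<^sub>L ?\<Phi>) o\<^sub>L G o\<^sub>L (badj ?\<Phi> o\<^sub>L ?\<Phi>) = badj ?\<Phi> o\<^sub>L ?\<Phi>"
    using selfadjoint_pseudo_inverse[OF badj_Gram] by blast
  define P where "P = ?\<Phi> o\<^sub>L G o\<^sub>L badj ?\<Phi>"
  define M where "M = badj (?\<Phi> o\<^sub>L G) o\<^sub>L Q o\<^sub>L (?\<Phi> o\<^sub>L G)"
  have "nonneg_op M"
    unfolding M_def using assms(1) by (rule nonneg_op_badj_sandwich)
  have "?\<Phi> o\<^sub>L M o\<^sub>L badj ?\<Phi> = P o\<^sub>L Q o\<^sub>L P"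
    by (simp add: M_def P_def badj_compose G blinfun_compose_assoc)
  then have "objM phi u y \<gamma> M = objQ phi u y \<gamma> (P o\<^sub>L Q o\<^sub>L P)"
    by (simp flip: objQ_sandwich)
  also have "\<dots> \<le> objQ phi u y \<gamma> Q"
    using Gram_pseudo_inverse_projection[OF G KGK] assms(2)
    by (intro objQ_compress_le) (simp_all flip: P_def Phi_op_axis)
  finally show ?thesis using \<open>nonneg_op M\<close> by blast
qed

lemma is_nonneg_minimizer_transfer:
  fixes f :: "('a::real_inner \<Rightarrow>\<^sub>L 'a) \<Rightarrow> real" and g :: "('b::real_inner \<Rightarrow>\<^sub>L 'b) \<Rightarrow> real"
    and T :: "('b \<Rightarrow>\<^sub>L 'b) \<Rightarrow> ('a \<Rightarrow>\<^sub>L 'a)"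
  assumes T_nonneg: "\<And>M. nonneg_op M \<Longrightarrow> nonneg_op (T M)"
    and f_T: "\<And>M. f (T M) = g M"
    and g_le_f: "\<And>Q. nonneg_op Q \<Longrightarrow> \<exists>M. nonneg_op M \<and> g M \<le> f Q"
    and "\<exists>Q. is_nonneg_minimizer f Q"
  shows "(\<exists>M. is_nonneg_minimizer g M) \<and> (\<forall>M. is_nonneg_minimizer g M \<longrightarrow> is_nonneg_minimizer f (T M))"
proof
  obtain Q0 where Q0: "is_nonneg_minimizer f Q0" using assms(4) by blast
  then obtain M0 where M0: "nonneg_op M0" "g M0 \<le> f Q0"
    using g_le_f unfolding is_nonneg_minimizer_def by blast
  have "g M0 \<le> g M" if "nonneg_op M" for M
    using Q0 M0(2) T_nonneg[OF that] f_T[of M] unfolding is_nonneg_minimizer_def by fastforce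
  with M0(1) show "\<exists>M. is_nonneg_minimizer g M"
    unfolding is_nonneg_minimizer_def by blast
next
  show "\<forall>M. is_nonneg_minimizer g M \<longrightarrow> is_nonneg_minimizer f (T M)"
  proof (intro allI impI)
    fix M assume M: "is_nonneg_minimizer g M"
    have "f (T M) \<le> f Q" if "nonneg_op Q" for Q
      using g_le_f[OF that] M f_T[of M] unfolding is_nonneg_minimizer_def by fastforce
    with M T_nonneg show "is_nonneg_minimizer f (T M)"
      unfolding is_nonneg_minimizer_def by blast
  qed
qed

theorem corollary1:
  fixes phi :: "'u::euclidean_space \<Rightarrow> ('u \<Rightarrow>\<^sub>L 'w::{real_inner, complete_space})"
    and u y :: "'n::finite \<Rightarrow> 'u"
    and \<gamma> :: real
  assumes "\<gamma> > 0"
    and "\<exists>Q. is_nonneg_minimizer (objQ phi u y \<gamma>) Q"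
  shows "(\<exists>M. is_nonneg_minimizer (objM phi u y \<gamma>) M)
    \<and> (\<forall>M. is_nonneg_minimizer (objM phi u y \<gamma>) M \<longrightarrow>
         is_nonneg_minimizer (objQ phi u y \<gamma>) (Phi_op phi u o\<^sub>L M o\<^sub>L badj (Phi_op phi u))
         \<and> (\<forall>x. blinfun_apply (badj (phi x) o\<^sub>L (Phi_op phi u o\<^sub>L M o\<^sub>L badj (Phi_op phi u)) o\<^sub>L phi x) x
                = blinfun_apply (badj (kappa_op phi u x) o\<^sub>L M o\<^sub>L kappa_op phi u x) x))"
proof -
  have "(\<exists>M. is_nonneg_minimizer (objM phi u y \<gamma>) M) \<and>
    (\<forall>M. is_nonneg_minimizer (objM phi u y \<gamma>) M \<longrightarrow>
       is_nonneg_minimizer (objQ phi u y \<gamma>) (Phi_op phi u o\<^sub>L M o\<^sub>L badj (Phi_op phi u)))"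
    using assms
    by (intro is_nonneg_minimizer_transfer nonneg_op_sandwich objQ_sandwich exists_objM_le_objQ)
      simp_all
  then show ?thesis by (simp add: kappa_op_sandwich)
qed

end
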